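(* Let $G=(V,E)$ be a directed unweighted graph with finite diameter $D=3h+z$, where $h\ge 0$ and $z\in\{0,1,2\}$, and let $s\in[1,n]$. Let $w\in V$ satisfy $d_s^{\mathrm{out}}(w)=\max_{v\in V}d_s^{\mathrm{out}}(v)$ and let $S\subseteq V$ be any set with $S\cap N_s^{\mathrm{out}}(v)\neq\emptyset$ for every $v\in V$. Let $\hat D$ be the maximum of $d^{\mathrm{out}}(w)$, $\max_{u\in N_s^{\mathrm{out}}(w)}d^{\mathrm{in}}(u)$ and $\max_{u\in S}d^{\mathrm{out}}(u)$. Then $\hat D\le D$; moreover $\hat D\ge 2h+z$ if $z\in\{0,1\}$ and $\hat D\ge 2h+1$ if $z=2$.
   Context: $d(u,v)$ is the shortest-path distance from $u$ to $v$; $d^{\mathrm{out}}(v)=\max_u d(v,u)$, $d^{\mathrm{in}}(v)=\max_u d(u,v)$. $N_s^{\mathrm{out}}(v)$ is the set of the $s$ vertices $u$ with smallest $d(v,u)$, ties broken by smaller vertex id; $d_s^{\mathrm{out}}(v)=\max_{u\in N_s^{\mathrm{out}}(v)} d(v,u)$. *)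

theory Defs
  imports Main
begin

text \<open>Directed unweighted graph on vertex set V = {..<n} (vertex ids are the naturals
  below n, used for tie-breaking), edge set E.  The distance is the least number of
  edges of a walk (relpow of E).\<close>

definition dist :: "(nat \<times> nat) set \<Rightarrow> nat \<Rightarrow> nat \<Rightarrow> nat" where
  "dist E u v = (LEAST k. (u, v) \<in> E ^^ k)"

definition dout :: "nat \<Rightarrow> (nat \<times> nat) set \<Rightarrow> nat \<Rightarrow> nat" where
  "dout n E v = Max ((\<lambda>u. dist E v u) ` {..<n})"

definition din :: "nat \<Rightarrow> (nat \<times> nat) set \<Rightarrow> nat \<Rightarrow> nat" where
  "din n E v = Max ((\<lambda>u. dist E u v) ` {..<n})"

definition diameter :: "nat \<Rightarrow> (nat \<times> nat) set \<Rightarrow> nat" where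
  "diameter n E = Max ((\<lambda>(u, v). dist E u v) ` ({..<n} \<times> {..<n}))"

text \<open>The s vertices u with smallest (d(v,u), u) in lexicographic order.\<close>
definition Nout :: "nat \<Rightarrow> (nat \<times> nat) set \<Rightarrow> nat \<Rightarrow> nat \<Rightarrow> nat set" where
  "Nout n E s v = {u \<in> {..<n}. card {x \<in> {..<n}.
       dist E v x < dist E v u \<or> (dist E v x = dist E v u \<and> x < u)} < s}"

definition dsout :: "nat \<Rightarrow> (nat \<times> nat) set \<Rightarrow> nat \<Rightarrow> nat \<Rightarrow> nat" where
  "dsout n E s v = Max ((\<lambda>u. dist E v u) ` Nout n E s v)"

end

theory Submission
  imports Defs
begin

(* Let D be the diameter, attained by a pair (a, b), and let X be any
   common upper bound of d_out(w), of d_in(u) for u in N_s(w) and of d_out(u) for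
   u in S (for instance Dhat).  For an arbitrary threshold k one of two things happens:
   - d_s(w) <= k.  By the choice of w also d_s(a) <= k; a vertex u of S inside N_s(a)
     satisfies d(a,u) <= k, so D <= d(a,u) + d(u,b) <= k + X.
   - k < d_s(w).  Every vertex closer to w than d_s(w) lies in N_s(w).  Cutting a
     shortest w-b path after min(k, d(w,b)) edges gives such a vertex u, and
     D <= d(a,u) + d(u,b) <= d_in(u) + (d_out(w) - k) <= 2X - k.
   Hence D <= X + k or D + k <= 2X; with k = h and D = 3h + z this is exactly the lower
   bound of the theorem, while the upper bound Dhat <= D holds because every
   eccentricity is at most the diameter. *)

lemma walk_stays_in_vertices:
  assumes "E \<subseteq> {..<n} \<times> {..<n}" "x < n" "(x, y) \<in> E ^^ k"
  shows "y < n"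
  using assms(3)
proof (induction k arbitrary: y)
  case 0
  then show ?case using assms(2) by simp
next
  case (Suc k)
  then obtain u where "(x, u) \<in> E ^^ k" "(u, y) \<in> E" by auto
  then show ?case using assms(1) by auto
qed

lemma dist_walk: "\<exists>k. (u, v) \<in> E ^^ k \<Longrightarrow> (u, v) \<in> E ^^ dist E u v"
  unfolding dist_def by (rule LeastI_ex)

lemma dist_le_walk: "(u, v) \<in> E ^^ k \<Longrightarrow> dist E u v \<le> k"
  unfolding dist_def by (rule Least_le)

lemma dist_self: "dist E u u = 0"
  using dist_le_walk[where u = u and v = u and E = E and k = 0] by simp

lemma dist_eq_0: "dist E u v = 0 \<Longrightarrow> \<exists>k. (u, v) \<in> E ^^ k \<Longrightarrow> v = u"
  using dist_walk[of u v E] by simp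

lemma dist_triangle:
  assumes "\<exists>k. (u, v) \<in> E ^^ k" "\<exists>k. (v, x) \<in> E ^^ k"
  shows "dist E u x \<le> dist E u v + dist E v x"
  using dist_walk[OF assms(1)] dist_walk[OF assms(2)]
  by (intro dist_le_walk) (auto simp: relpow_add)

lemma shortest_walk_split:
  assumes "\<exists>k. (u, v) \<in> E ^^ k" "j \<le> dist E u v"
  obtains x where "(u, x) \<in> E ^^ j" "(x, v) \<in> E ^^ (dist E u v - j)"
proof -
  have "(u, v) \<in> E ^^ (j + (dist E u v - j))"
    using dist_walk[OF assms(1)] assms(2) by simp
  then show ?thesis using that unfolding relpow_add by auto
qed

locale strongly_connected_graph =
  fixes n :: nat and E :: "(nat \<times> nat) set"
  assumes edges: "E \<subseteq> {..<n} \<times> {..<n}"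
    and strongly_connected: "\<forall>u\<in>{..<n}. \<forall>v\<in>{..<n}. \<exists>k. (u, v) \<in> E ^^ k"
begin

lemma reachable: "u < n \<Longrightarrow> v < n \<Longrightarrow> \<exists>k. (u, v) \<in> E ^^ k"
  using strongly_connected by auto

lemma triangle: "u < n \<Longrightarrow> v < n \<Longrightarrow> x < n \<Longrightarrow> dist E u x \<le> dist E u v + dist E v x"
  using dist_triangle reachable by blast

lemma dist_le_diameter: "u < n \<Longrightarrow> v < n \<Longrightarrow> dist E u v \<le> diameter n E"
  unfolding diameter_def by (rule Max_ge) auto

lemma diameter_attained:
  assumes "0 < n"
  obtains a b where "a < n" "b < n" "dist E a b = diameter n E"
proof -
  have "diameter n E \<in> (\<lambda>(u, v). dist E u v) ` ({..<n} \<times> {..<n})"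
    unfolding diameter_def by (rule Max_in) (use assms in auto)
  then show ?thesis using that by auto
qed

lemma dist_le_dout: "v < n \<Longrightarrow> dist E u v \<le> dout n E u"
  unfolding dout_def by (rule Max_ge) auto

lemma dist_le_din: "v < n \<Longrightarrow> dist E v u \<le> din n E u"
  unfolding din_def by (rule Max_ge) auto

lemma dout_le_diameter: "u < n \<Longrightarrow> dout n E u \<le> diameter n E"
  unfolding dout_def using dist_le_diameter by (subst Max_le_iff) auto

lemma din_le_diameter: "u < n \<Longrightarrow> din n E u \<le> diameter n E"
  unfolding din_def using dist_le_diameter by (subst Max_le_iff) auto

lemma Nout_subset: "Nout n E s v \<subseteq> {..<n}"
  unfolding Nout_def by auto

lemma finite_Nout: "finite (Nout n E s v)"
  unfolding Nout_def by simp

text \<open>A vertex precedes no other vertex in its own order, so it belongs to its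
  s-neighbourhood as soon as s is positive.\<close>
lemma self_in_Nout:
  assumes "1 \<le> s" "v < n"
  shows "v \<in> Nout n E s v"
proof -
  let ?before = "{x \<in> {..<n}. dist E v x < dist E v v \<or> (dist E v x = dist E v v \<and> x < v)}"
  have "?before = {}"
    using dist_eq_0[of E v] reachable[OF assms(2)] by (auto simp: dist_self) (metis less_irrefl)
  then have "card ?before < s" using assms(1) by (simp only: card.empty)
  then show ?thesis unfolding Nout_def using assms(2) by simp
qed

lemma dist_le_dsout: "u \<in> Nout n E s v \<Longrightarrow> dist E v u \<le> dsout n E s v"
  unfolding dsout_def by (rule Max_ge) (use finite_Nout in auto)

text \<open>Every vertex strictly closer to v than dsout v belongs to the s-neighbourhood
  of v: it precedes a farthest member of the neighbourhood.\<close>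
lemma closer_in_Nout:
  assumes "1 \<le> s" "v < n" "u < n" "dist E v u < dsout n E s v"
  shows "u \<in> Nout n E s v"
proof -
  let ?pred = "\<lambda>y. {x \<in> {..<n}. dist E v x < dist E v y \<or> (dist E v x = dist E v y \<and> x < y)}"
  have "dsout n E s v \<in> (\<lambda>u. dist E v u) ` Nout n E s v"
    unfolding dsout_def
    by (rule Max_in) (use finite_Nout self_in_Nout[OF assms(1,2)] in auto)
  then obtain y where y: "y \<in> Nout n E s v" "dist E v y = dsout n E s v" by auto
  have "?pred u \<subseteq> ?pred y" using assms(4) y(2) by auto
  then have "card (?pred u) \<le> card (?pred y)" by (intro card_mono) auto
  then show ?thesis using y(1) assms(3) unfolding Nout_def by auto
qed

lemma small_radius_bound:
  assumes "1 \<le> s" "0 < n" "\<forall>v\<in>{..<n}. dsout n E s v \<le> k"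
    and "S \<subseteq> {..<n}" "\<forall>v\<in>{..<n}. S \<inter> Nout n E s v \<noteq> {}"
  obtains u where "u \<in> S" "diameter n E \<le> k + dout n E u"
proof -
  obtain a b where ab: "a < n" "b < n" "dist E a b = diameter n E"
    using diameter_attained[OF assms(2)] .
  obtain u where u: "u \<in> S" "u \<in> Nout n E s a" using assms(5) ab(1) by auto
  have un: "u < n" using u(1) assms(4) by auto
  have "dist E a u \<le> k" using dist_le_dsout[OF u(2)] assms(3) ab(1) by (meson le_trans lessThan_iff)
  moreover have "dist E u b \<le> dout n E u" using dist_le_dout[OF ab(2)] .
  ultimately have "diameter n E \<le> k + dout n E u"
    using triangle[OF ab(1) un ab(2)] ab(3) by linarith
  with u(1) show ?thesis using that by blast
qed

text \<open>Large radius: if k < dsout w, cutting a shortest path from w to the end of a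
  diametral pair after at most k edges yields a vertex of Nout w whose in-eccentricity
  is at least D - (dout w - k).\<close>
lemma large_radius_bound:
  assumes "1 \<le> s" "w < n" "k < dsout n E s w"
  obtains u where "u \<in> Nout n E s w" "diameter n E \<le> din n E u + (dout n E w - k)"
proof -
  have "0 < n" using assms(2) by simp
  then obtain a b where ab: "a < n" "b < n" "dist E a b = diameter n E"
    by (rule diameter_attained)
  define m where "m = dist E w b"
  obtain u where u1: "(w, u) \<in> E ^^ min k m" and u2: "(u, b) \<in> E ^^ (m - min k m)"
    using shortest_walk_split[OF reachable[OF assms(2) ab(2)], of "min k m"]
    unfolding m_def by auto
  have un: "u < n" using walk_stays_in_vertices[OF edges assms(2) u1] .
  have "dist E w u < dsout n E s w" using dist_le_walk[OF u1] assms(3) by linarith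
  then have uN: "u \<in> Nout n E s w" using closer_in_Nout assms(1,2) un by blast
  have "dist E u b \<le> dout n E w - k"
    using dist_le_walk[OF u2] dist_le_dout[OF ab(2), of w] unfolding m_def by linarith
  moreover have "dist E a u \<le> din n E u" using dist_le_din[OF ab(1)] .
  ultimately have "diameter n E \<le> din n E u + (dout n E w - k)"
    using triangle[OF ab(1) un ab(2)] ab(3) by linarith
  with uN show ?thesis using that by blast
qed

lemma eccentricity_lower_bound:
  assumes "1 \<le> s" "w < n" "dsout n E s w = Max ((\<lambda>v. dsout n E s v) ` {..<n})"
    and "S \<subseteq> {..<n}" "\<forall>v\<in>{..<n}. S \<inter> Nout n E s v \<noteq> {}"
    and "dout n E w \<le> X" "\<forall>u\<in>Nout n E s w. din n E u \<le> X" "\<forall>u\<in>S. dout n E u \<le> X"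
  shows "diameter n E \<le> X + k \<or> diameter n E + k \<le> 2 * X"
proof (cases "dsout n E s w \<le> k")
  case True
  have "\<forall>v\<in>{..<n}. dsout n E s v \<le> k"
    using True assms(3) by (metis Max_ge finite_imageI finite_lessThan image_eqI le_trans)
  moreover have "0 < n" using assms(2) by simp
  ultimately obtain u where "u \<in> S" "diameter n E \<le> k + dout n E u"
    using small_radius_bound assms(1,4,5) by blast
  then show ?thesis using assms(8) by fastforce
next
  case False
  then obtain u where "u \<in> Nout n E s w" "diameter n E \<le> din n E u + (dout n E w - k)"
    using large_radius_bound assms(1,2) by (metis not_le)
  then show ?thesis using assms(6,7) by fastforce
qed

end

theorem lemma4:
  fixes n s w h z :: nat and E :: "(nat \<times> nat) set" and S :: "nat set"
  assumes edges: "E \<subseteq> {..<n} \<times> {..<n}"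
    and strongly_connected: "\<forall>u\<in>{..<n}. \<forall>v\<in>{..<n}. \<exists>k. (u, v) \<in> E ^^ k"
    and diam: "diameter n E = 3 * h + z"
    and z: "z \<in> {0, 1, 2}"
    and s: "1 \<le> s" "s \<le> n"
    and w: "w \<in> {..<n}" "dsout n E s w = Max ((\<lambda>v. dsout n E s v) ` {..<n})"
    and S: "S \<subseteq> {..<n}" "\<forall>v\<in>{..<n}. S \<inter> Nout n E s v \<noteq> {}"
  shows "let Dhat = max (dout n E w) (max (Max ((\<lambda>u. din n E u) ` Nout n E s w))
                                         (Max ((\<lambda>u. dout n E u) ` S)))
         in Dhat \<le> diameter n E
            \<and> (z \<in> {0, 1} \<longrightarrow> Dhat \<ge> 2 * h + z)
            \<and> (z = 2 \<longrightarrow> Dhat \<ge> 2 * h + 1)"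
proof -
  interpret strongly_connected_graph n E using edges strongly_connected by unfold_locales
  define A where "A = Max ((\<lambda>u. din n E u) ` Nout n E s w)"
  define B where "B = Max ((\<lambda>u. dout n E u) ` S)"
  have wn: "w < n" and finS: "finite S" using w(1) S(1) finite_subset by auto
  have Nw: "Nout n E s w \<noteq> {}" using self_in_Nout[OF s(1) wn] by blast
  have Sne: "S \<noteq> {}" using S(2) wn by auto
  have A: "\<forall>u\<in>Nout n E s w. din n E u \<le> A" "A \<le> diameter n E"
    unfolding A_def using finite_Nout Nw Nout_subset din_le_diameter
    by (auto intro: Max_ge simp: Max_le_iff subset_iff)
  have B: "\<forall>u\<in>S. dout n E u \<le> B" "B \<le> diameter n E"
    unfolding B_def using finS Sne S(1) dout_le_diameter
    by (auto intro: Max_ge simp: Max_le_iff subset_iff)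
  have "diameter n E \<le> max (dout n E w) (max A B) + h
        \<or> diameter n E + h \<le> 2 * max (dout n E w) (max A B)"
    using eccentricity_lower_bound[OF s(1) wn w(2) S, where X = "max (dout n E w) (max A B)"]
      A(1) B(1) by fastforce
  moreover have "max (dout n E w) (max A B) \<le> diameter n E"
    using dout_le_diameter[OF wn] A(2) B(2) by simp
  ultimately show ?thesis using diam z unfolding Let_def A_def[symmetric] B_def[symmetric] by auto
qed

end
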